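(* Let $p\ge 2$. There is no pair $(\vec\psi, D)$, where $\vec\psi=(\psi_1,\dots,\psi_N)$, $N=\tfrac12(p+1)(p+2)$, is a basis of $\mathcal{T}(p)$ suitable for continuous finite elements (consisting of one vertex function for each of the three vertices, $p-1$ edge functions for each of the three edges, and $\tfrac12(p-1)(p-2)$ interior functions) and $D$ is a nonsingular real diagonal $N\times N$ matrix, such that $D$ is a $(p-1)$-exact pseudo-mass matrix for $\vec\psi$, i.e. such that for every $f\in\mathcal{T}(p-1)$ the vector $\vec u=D^{-1}\int_{\Omega_{ref}} f\,\vec\psi\,d\Omega$ satisfies $\vec u^{\,T}\vec\psi=f$ on $\Omega_{ref}$.
   Context: $\Omega_{ref}=\{(r,s): -1\le r,\ -1\le s,\ r+s\le 0\}$ with vertices $V_A=(-1,1)$, $V_B=(-1,-1)$, $V_C=(1,-1)$; edge $E_{\mathcal A}$ is the edge from $V_B$ to $V_C$ (opposite $V_A$), $E_{\mathcal B}$ the edge from $V_C$ to $V_A$ (opposite $V_B$), $E_{\mathcal C}$ the edge from $V_A$ to $V_B$ (opposite $V_C$). $\mathcal{T}(q)=\mathrm{span}\{r^ns^m: m,n\ge0,\ m+n\le q\}$. A vertex function (for a given vertex) is a function on $\Omega_{ref}$ that is nonzero at only that vertex among the three vertices and vanishes identically on the opposite edge. An edge function (for a given edge) is a function that is nonzero along only that edge and vanishes identically on the other two edges. An interior function is a nonzero function vanishing identically on all three edges. A nonsingular matrix $\underline{M}$ is called a $k$-exact pseudo-mass matrix for the basis $\vec\psi$ if $\vec u=\underline{M}^{-1}\int_{\Omega_{ref}}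 f\vec\psi\,d\Omega$ satisfies $\vec u^{\,T}\vec\psi=f$ for all $f\in\mathcal{T}(k)$. *)

theory Defs
  imports "HOL-Analysis.Analysis"
begin

definition Omega_ref :: "(real \<times> real) set" where
  "Omega_ref = {(r,s). -1 \<le> r \<and> -1 \<le> s \<and> r + s \<le> 0}"

definition V_A :: "real \<times> real" where "V_A = (-1, 1)"
definition V_B :: "real \<times> real" where "V_B = (-1, -1)"
definition V_C :: "real \<times> real" where "V_C = (1, -1)"

text \<open>Edge opposite V_A (from V_B to V_C), opposite V_B (from V_C to V_A),
  opposite V_C (from V_A to V_B).\<close>
definition E_A :: "(real \<times> real) set" where
  "E_A = {(r,s). s = -1 \<and> -1 \<le> r \<and> r \<le> 1}"
definition E_B :: "(real \<times> real) set" where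
  "E_B = {(r,s). r + s = 0 \<and> -1 \<le> r \<and> r \<le> 1}"
definition E_C :: "(real \<times> real) set" where
  "E_C = {(r,s). r = -1 \<and> -1 \<le> s \<and> s \<le> 1}"

definition T :: "nat \<Rightarrow> (real \<times> real \<Rightarrow> real) set" where
  "T q = {f. \<exists>c :: nat \<Rightarrow> nat \<Rightarrow> real. \<forall>r s.
            f (r,s) = (\<Sum>n\<le>q. \<Sum>m\<le>q - n. c n m * r ^ n * s ^ m)}"

definition vertex_fun :: "(real \<times> real) \<Rightarrow> (real \<times> real) set \<Rightarrow> (real \<times> real) set
    \<Rightarrow> (real \<times> real \<Rightarrow> real) \<Rightarrow> bool" where
  "vertex_fun v W E g \<longleftrightarrow> g v \<noteq> 0 \<and> (\<forall>w\<in>W. g w = 0) \<and> (\<forall>x\<in>E. g x = 0)"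

definition edge_fun :: "(real \<times> real) set \<Rightarrow> (real \<times> real) set \<Rightarrow> (real \<times> real) set
    \<Rightarrow> (real \<times> real \<Rightarrow> real) \<Rightarrow> bool" where
  "edge_fun E E1 E2 g \<longleftrightarrow> (\<exists>x\<in>E. g x \<noteq> 0) \<and> (\<forall>x\<in>E1. g x = 0) \<and> (\<forall>x\<in>E2. g x = 0)"

definition interior_fun :: "(real \<times> real \<Rightarrow> real) \<Rightarrow> bool" where
  "interior_fun g \<longleftrightarrow> (\<exists>x\<in>Omega_ref. g x \<noteq> 0) \<and>
      (\<forall>x\<in>E_A \<union> E_B \<union> E_C. g x = 0)"

definition is_basis_T :: "nat \<Rightarrow> nat \<Rightarrow> (nat \<Rightarrow> real \<times> real \<Rightarrow> real) \<Rightarrow> bool" where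
  "is_basis_T q N \<psi> \<longleftrightarrow>
     (\<forall>i<N. \<psi> i \<in> T q) \<and>
     (\<forall>c. (\<forall>x\<in>Omega_ref. (\<Sum>i<N. c i * \<psi> i x) = 0) \<longrightarrow> (\<forall>i<N. c i = 0)) \<and>
     (\<forall>f\<in>T q. \<exists>c. \<forall>x\<in>Omega_ref. (\<Sum>i<N. c i * \<psi> i x) = f x)"

definition suitable_basis :: "nat \<Rightarrow> (nat \<Rightarrow> real \<times> real \<Rightarrow> real) \<Rightarrow> bool" where
  "suitable_basis p \<psi> \<longleftrightarrow>
     (let N = (p + 1) * (p + 2) div 2 in
      is_basis_T p N \<psi> \<and>
      (\<exists>a b c :: nat. \<exists>IA IB IC I :: nat set.
         {a, b, c} \<union> IA \<union> IB \<union> IC \<union> I = {..<N} \<and>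
         card {a, b, c} = 3 \<and>
         card IA = p - 1 \<and> card IB = p - 1 \<and> card IC = p - 1 \<and>
         card I = (p - 1) * (p - 2) div 2 \<and>
         disjnt {a,b,c} IA \<and> disjnt {a,b,c} IB \<and> disjnt {a,b,c} IC \<and> disjnt {a,b,c} I \<and>
         disjnt IA IB \<and> disjnt IA IC \<and> disjnt IA I \<and>
         disjnt IB IC \<and> disjnt IB I \<and> disjnt IC I \<and>
         vertex_fun V_A {V_B, V_C} E_A (\<psi> a) \<and>
         vertex_fun V_B {V_A, V_C} E_B (\<psi> b) \<and>
         vertex_fun V_C {V_A, V_B} E_C (\<psi> c) \<and>
         (\<forall>i\<in>IA. edge_fun E_A E_B E_C (\<psi> i)) \<and>
         (\<forall>i\<in>IB. edge_fun E_B E_A E_C (\<psi> i)) \<and>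
         (\<forall>i\<in>IC. edge_fun E_C E_A E_B (\<psi> i)) \<and>
         (\<forall>i\<in>I. interior_fun (\<psi> i))))"

end

theory Submission
  imports Defs "HOL-Library.Function_Algebras" "HOL-Computational_Algebra.Polynomial"
begin

text \<open>Suppose such a diagonal \<open>D\<close> existed and let \<open>\<psi>\<close> be an edge function of the edge
  \<open>E_B\<close> (\<open>r + s = 0\<close>). It vanishes on the other two edges, so \<open>\<psi> = (r+1)(s+1) h\<close> with
  \<open>h \<in> T(p-2)\<close>, and \<open>f = -(r+s) h \<in> T(p-1)\<close> vanishes on \<open>E_B\<close>. Only the vertex functions
  of \<open>V_A\<close>, \<open>V_C\<close> and the \<open>p - 1\<close> edge functions of \<open>E_B\<close> are nonzero on \<open>E_B\<close>; their
  \<open>p + 1\<close> traces span all polynomials of degree \<open>\<le> p\<close> along the edge, so they are linearly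
  independent. Exactness of \<open>D\<close> on \<open>f\<close> therefore forces \<open>\<integral> f \<psi> = 0\<close>. But
  \<open>f \<psi> = -(r+s)(r+1)(s+1) h\<^sup>2\<close> is nonnegative on the triangle and positive near a point of
  \<open>E_B\<close> where \<open>\<psi> \<noteq> 0\<close>.\<close>

definition poly2 :: "(nat \<Rightarrow> nat \<Rightarrow> real) \<Rightarrow> nat \<Rightarrow> real \<times> real \<Rightarrow> real" where
  "poly2 c K x = (\<Sum>n\<le>K. \<Sum>m\<le>K. c n m * fst x ^ n * snd x ^ m)"

lemma T_iff_poly2: "f \<in> T q \<longleftrightarrow> (\<exists>c. (\<forall>n m. q < n + m \<longrightarrow> c n m = 0) \<and> f = poly2 c q)"
proof
  assume "f \<in> T q"
  then obtain c where c: "\<And>r s. f (r,s) = (\<Sum>n\<le>q. \<Sum>m\<le>q - n. c n m * r ^ n * s ^ m)"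
    unfolding T_def by auto
  define c' where "c' n m = (if n + m \<le> q then c n m else 0)" for n m
  have "(\<Sum>m\<le>q - n. c n m * r ^ n * s ^ m) = (\<Sum>m\<le>q. c' n m * r ^ n * s ^ m)"
    if "n \<le> q" for n r s
  proof -
    have "(\<Sum>m\<le>q - n. c n m * r ^ n * s ^ m) = (\<Sum>m\<le>q - n. c' n m * r ^ n * s ^ m)"
      by (rule sum.cong) (use that in \<open>auto simp: c'_def\<close>)
    also have "\<dots> = (\<Sum>m\<le>q. c' n m * r ^ n * s ^ m)"
      by (rule sum.mono_neutral_left) (auto simp: c'_def)
    finally show ?thesis .
  qed
  then have "f = poly2 c' q"
    by (auto simp: fun_eq_iff poly2_def c intro: sum.cong)
  then show "\<exists>c. (\<forall>n m. q < n + m \<longrightarrow> c n m = 0) \<and> f = poly2 c q"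
    by (intro exI[of _ c']) (auto simp: c'_def)
next
  assume "\<exists>c. (\<forall>n m. q < n + m \<longrightarrow> c n m = 0) \<and> f = poly2 c q"
  then obtain c where c0: "\<And>n m. q < n + m \<Longrightarrow> c n m = 0" and f: "f = poly2 c q" by auto
  have "(\<Sum>m\<le>q. c n m * r ^ n * s ^ m) = (\<Sum>m\<le>q - n. c n m * r ^ n * s ^ m)"
    if "n \<le> q" for n r s
    by (rule sum.mono_neutral_right) (auto simp: c0)
  then show "f \<in> T q"
    unfolding T_def f poly2_def by (auto intro!: exI[of _ c] sum.cong)
qed

lemma poly2_as_poly_sum:
  "poly2 c K (r,s) = (\<Sum>m\<le>K. poly (\<Sum>n\<le>K. monom (c n m) n) r * s ^ m)"
  unfolding poly2_def
  by (subst sum.swap) (simp add: poly_sum poly_monom sum_distrib_right mult.assoc)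

lemma T_iff_poly_sum:
  "f \<in> T q \<longleftrightarrow> (\<exists>P. (\<forall>m\<le>q. degree (P m) + m \<le> q) \<and>
                     (\<forall>r s. f (r,s) = (\<Sum>m\<le>q. poly (P m) r * s ^ m)))"
proof
  assume "f \<in> T q"
  then obtain c where c0: "\<And>n m. q < n + m \<Longrightarrow> c n m = 0" and f: "f = poly2 c q"
    unfolding T_iff_poly2 by auto
  define P where "P m = (\<Sum>n\<le>q. monom (c n m) n)" for m
  have "degree (P m) + m \<le> q" if "m \<le> q" for m
  proof -
    have "degree (P m) \<le> q - m"
      unfolding P_def by (rule degree_le) (auto simp: coeff_sum coeff_monom c0)
    then show ?thesis using that by simp
  qed
  moreover have "f (r,s) = (\<Sum>m\<le>q. poly (P m) r * s ^ m)" for r s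
    unfolding f P_def by (rule poly2_as_poly_sum)
  ultimately show "\<exists>P. (\<forall>m\<le>q. degree (P m) + m \<le> q) \<and>
                     (\<forall>r s. f (r,s) = (\<Sum>m\<le>q. poly (P m) r * s ^ m))" by blast
next
  assume "\<exists>P. (\<forall>m\<le>q. degree (P m) + m \<le> q) \<and>
                     (\<forall>r s. f (r,s) = (\<Sum>m\<le>q. poly (P m) r * s ^ m))"
  then obtain P where deg: "\<And>m. m \<le> q \<Longrightarrow> degree (P m) + m \<le> q"
    and f: "\<And>r s. f (r,s) = (\<Sum>m\<le>q. poly (P m) r * s ^ m)" by blast
  define c where "c n m = (if m \<le> q then coeff (P m) n else 0)" for n m
  have "c n m = 0" if "q < n + m" for n m
    using deg[of m] that by (auto simp: c_def coeff_eq_0)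
  moreover have "f = poly2 c q"
  proof (rule ext, clarify)
    fix r s
    have "(\<Sum>n\<le>q. monom (c n m) n) = P m" if "m \<le> q" for m
      using deg[OF that] that by (simp add: c_def poly_as_sum_of_monoms')
    then show "f (r,s) = poly2 c q (r,s)"
      unfolding poly2_as_poly_sum f by simp
  qed
  ultimately show "f \<in> T q" unfolding T_iff_poly2 by blast
qed

lemma T_swap: "f \<in> T q \<Longrightarrow> (\<lambda>(r,s). f (s,r)) \<in> T q"
  unfolding T_iff_poly2
proof (elim exE conjE)
  fix c assume c0: "\<forall>n m. q < n + m \<longrightarrow> c n m = 0" and f: "f = poly2 c q"
  have "(\<lambda>(r,s). f (s,r)) = poly2 (\<lambda>n m. c m n) q"
    unfolding f poly2_def by (auto simp: fun_eq_iff mult_ac intro: sum.swap)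
  then show "\<exists>c'. (\<forall>n m. q < n + m \<longrightarrow> c' n m = 0) \<and> (\<lambda>(r,s). f (s,r)) = poly2 c' q"
    using c0 by (intro exI[of _ "\<lambda>n m. c m n"]) auto
qed

lemma T_add: "f \<in> T q \<Longrightarrow> g \<in> T q \<Longrightarrow> (\<lambda>x. f x + g x) \<in> T q"
  unfolding T_iff_poly_sum
proof (elim exE conjE)
  fix P P' assume deg: "\<forall>m\<le>q. degree (P m) + m \<le> q" and deg': "\<forall>m\<le>q. degree (P' m) + m \<le> q"
    and "\<forall>r s. f (r,s) = (\<Sum>m\<le>q. poly (P m) r * s ^ m)"
    and "\<forall>r s. g (r,s) = (\<Sum>m\<le>q. poly (P' m) r * s ^ m)"
  moreover have "degree (P m + P' m) + m \<le> q" if "m \<le> q" for m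
    using degree_add_le_max[of "P m" "P' m"] deg deg' that by force
  ultimately show "\<exists>P''. (\<forall>m\<le>q. degree (P'' m) + m \<le> q) \<and>
      (\<forall>r s. f (r,s) + g (r,s) = (\<Sum>m\<le>q. poly (P'' m) r * s ^ m))"
    by (intro exI[of _ "\<lambda>m. P m + P' m"]) (auto simp: sum.distrib distrib_right)
qed

lemma T_uminus: "f \<in> T q \<Longrightarrow> (\<lambda>x. - f x) \<in> T q"
  unfolding T_iff_poly_sum
  by (elim exE conjE, rule exI[of _ "\<lambda>m. - P m" for P]) (auto simp: sum_negf)

lemma T_mult_fst: "f \<in> T q \<Longrightarrow> (\<lambda>x. fst x * f x) \<in> T (Suc q)"
  unfolding T_iff_poly_sum
proof (elim exE conjE)
  fix P assume deg: "\<forall>m\<le>q. degree (P m) + m \<le> q"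
    and f: "\<forall>r s. f (r,s) = (\<Sum>m\<le>q. poly (P m) r * s ^ m)"
  define P' where "P' m = (if m \<le> q then [:0,1:] * P m else 0)" for m
  have "degree (P' m) + m \<le> Suc q" if "m \<le> Suc q" for m
    using deg degree_mult_le[of "[:0,1:]" "P m"] that by (auto simp: P'_def)
  moreover have "r * f (r,s) = (\<Sum>m\<le>Suc q. poly (P' m) r * s ^ m)" for r s
    by (simp add: f P'_def sum_distrib_left mult.assoc)
  ultimately show "\<exists>P'. (\<forall>m\<le>Suc q. degree (P' m) + m \<le> Suc q) \<and>
      (\<forall>r s. fst (r,s) * f (r,s) = (\<Sum>m\<le>Suc q. poly (P' m) r * s ^ m))" by auto
qed

lemma T_mult_snd: "f \<in> T q \<Longrightarrow> (\<lambda>x. snd x * f x) \<in> T (Suc q)"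
proof -
  assume "f \<in> T q"
  then have "(\<lambda>x. fst x * (\<lambda>(r,s). f (s,r)) x) \<in> T (Suc q)"
    by (intro T_mult_fst T_swap)
  from T_swap[OF this] show ?thesis by (simp add: case_prod_unfold)
qed

lemma T_fst_power: "k \<le> q \<Longrightarrow> (\<lambda>x. fst x ^ k) \<in> T q"
  unfolding T_iff_poly_sum
  by (rule exI[of _ "\<lambda>m. if m = 0 then monom 1 k else 0"])
     (auto simp: degree_monom_eq poly_monom sum.atMost_shift[of _ q] sum.neutral)

lemma T_mult_neg_sum: "f \<in> T q \<Longrightarrow> (\<lambda>x. - (fst x + snd x) * f x) \<in> T (Suc q)"
proof -
  assume "f \<in> T q"
  then have "(\<lambda>x. - (fst x * f x + snd x * f x)) \<in> T (Suc q)"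
    by (intro T_uminus T_add T_mult_fst T_mult_snd)
  then show ?thesis by (simp add: algebra_simps)
qed

lemma T_continuous: "f \<in> T q \<Longrightarrow> continuous_on UNIV f"
  unfolding T_iff_poly2 poly2_def by (auto intro!: continuous_intros)

lemma polyfun_eq_0_on_Ioo:
  fixes c :: "nat \<Rightarrow> real"
  assumes "a < b" and "\<And>x. a < x \<Longrightarrow> x < b \<Longrightarrow> (\<Sum>i\<le>n. c i * x ^ i) = 0"
    and "i \<le> n"
  shows "c i = 0"
proof (rule ccontr)
  assume "c i \<noteq> 0"
  then have "finite {x. (\<Sum>i\<le>n. c i * x ^ i) = 0}"
    using polyfun_finite_roots assms(3) by blast
  moreover have "{a<..<b} \<subseteq> {x. (\<Sum>i\<le>n. c i * x ^ i) = 0}"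
    using assms(2) by auto
  ultimately show False
    using assms(1) finite_subset infinite_Ioo by meson
qed

lemma T_factor_fst_plus_1:
  assumes f: "f \<in> T (Suc q)" and vanish: "\<And>s. -1 < s \<Longrightarrow> s < 1 \<Longrightarrow> f (-1, s) = 0"
  obtains h where "h \<in> T q" "\<And>r s. f (r,s) = (r + 1) * h (r,s)"
proof -
  obtain P where deg: "\<And>m. m \<le> Suc q \<Longrightarrow> degree (P m) + m \<le> Suc q"
    and fP: "\<And>r s. f (r,s) = (\<Sum>m\<le>Suc q. poly (P m) r * s ^ m)"
    using f unfolding T_iff_poly_sum by blast
  have "poly (P m) (-1) = 0" if "m \<le> Suc q" for m
  proof (rule polyfun_eq_0_on_Ioo[where c="\<lambda>m. poly (P m) (-1)" and n="Suc q" and a="-1" and b=1])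
    show "(\<Sum>m\<le>Suc q. poly (P m) (-1) * s ^ m) = 0" if "-1 < s" "s < 1" for s
      using vanish[OF that] fP[of "-1" s] by simp
  qed (use that in simp_all)
  then have dvd: "[:1,1:] dvd P m" if "m \<le> Suc q" for m
    using that poly_eq_0_iff_dvd[of "P m" "-1"] by simp
  define Q where "Q m = P m div [:1,1:]" for m
  have PQ: "P m = [:1,1:] * Q m" if "m \<le> Suc q" for m
    unfolding Q_def using dvd[OF that] by (metis dvd_mult_div_cancel)
  have degPQ: "degree (P m) = Suc (degree (Q m))" if "m \<le> Suc q" "Q m \<noteq> 0" for m
    using PQ[OF that(1)] degree_mult_eq[of "[:1,1:]" "Q m"] that(2) by simp
  have degQ: "degree (Q m) + m \<le> q" if "m \<le> q" for m
    using degPQ[of m] deg[of m] that by (cases "Q m = 0") auto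
  have "Q (Suc q) = 0"
    using degPQ[of "Suc q"] deg[of "Suc q"] by auto
  then have "f (r,s) = (r + 1) * (\<Sum>m\<le>q. poly (Q m) r * s ^ m)" for r s
  proof -
    have "f (r,s) = (\<Sum>m\<le>Suc q. (r + 1) * (poly (Q m) r * s ^ m))"
      unfolding fP by (rule sum.cong) (simp_all add: PQ algebra_simps)
    then show ?thesis using \<open>Q (Suc q) = 0\<close> by (simp add: sum_distrib_left)
  qed
  moreover have "(\<lambda>(r,s). \<Sum>m\<le>q. poly (Q m) r * s ^ m) \<in> T q"
    unfolding T_iff_poly_sum using degQ by auto
  ultimately show ?thesis using that by auto
qed

interpretation real_fun: vector_space "\<lambda>(c::real) (f::'a \<Rightarrow> real) x. c * f x"
  by unfold_locales (auto simp: fun_eq_iff plus_fun_def algebra_simps)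

lemma sum_fun_apply: "sum f A x = (\<Sum>a\<in>A. f a x)" for f :: "'a \<Rightarrow> 'b \<Rightarrow> real"
  by (induction A rule: infinite_finite_induct) (auto simp: plus_fun_def zero_fun_def)

lemma real_fun_independent_image:
  fixes m :: "nat \<Rightarrow> 'a \<Rightarrow> real"
  assumes m_indep: "\<And>a. (\<And>t. (\<Sum>k\<le>K. a k * m k t) = 0) \<Longrightarrow> \<forall>k\<le>K. a k = 0"
  shows "inj_on m {..K}" and "real_fun.independent (m ` {..K})"
proof -
  show inj: "inj_on m {..K}"
  proof (rule inj_onI, rule ccontr)
    fix k1 k2 assume k: "k1 \<in> {..K}" "k2 \<in> {..K}" "m k1 = m k2" "k1 \<noteq> k2"
    define a where "a k = (if k = k1 then 1 else if k = k2 then -1 else (0::real))" for k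
    have "(\<Sum>k\<le>K. a k * m k t) = (\<Sum>k\<in>{k1,k2}. a k * m k t)" for t
      by (rule sum.mono_neutral_right) (use k in \<open>auto simp: a_def\<close>)
    also have "\<dots> t = 0" for t using k by (simp add: a_def)
    finally have "a k1 = 0" using m_indep k by blast
    then show False by (simp add: a_def)
  qed
  show "real_fun.independent (m ` {..K})"
  proof
    assume "real_fun.dependent (m ` {..K})"
    then obtain w where w: "\<exists>v\<in>m ` {..K}. w v \<noteq> 0" "(\<Sum>v\<in>m ` {..K}. (\<lambda>x. w v * v x)) = 0"
      unfolding real_fun.dependent_finite[OF finite_imageI[OF finite_atMost]] by blast
    have "(\<Sum>k\<le>K. w (m k) * m k t) = (\<Sum>v\<in>m ` {..K}. (\<lambda>x. w v * v x)) t" for t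
      by (simp add: sum.reindex[OF inj] sum_fun_apply)
    then have "\<forall>k\<le>K. w (m k) = 0" using w(2) by (intro m_indep) simp
    then show False using w(1) by auto
  qed
qed

lemma combination_eq_0_if_span_contains_independent:
  fixes u :: "'b \<Rightarrow> 'a \<Rightarrow> real" and m :: "nat \<Rightarrow> 'a \<Rightarrow> real"
  assumes J: "finite J" "card J \<le> Suc K"
    and m_indep: "\<And>a. (\<And>t. (\<Sum>k\<le>K. a k * m k t) = 0) \<Longrightarrow> \<forall>k\<le>K. a k = 0"
    and m_span: "\<And>k. k \<le> K \<Longrightarrow> \<exists>c. \<forall>t. m k t = (\<Sum>j\<in>J. c j * u j t)"
    and e: "\<And>t. (\<Sum>j\<in>J. e j * u j t) = 0" and j0: "j0 \<in> J"
  shows "e j0 = 0"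
proof (rule ccontr)
  assume ne: "e j0 \<noteq> 0"
  have inj: "inj_on m {..K}"
    using m_indep by (rule real_fun_independent_image(1))
  have indep: "real_fun.independent (m ` {..K})"
    using m_indep by (rule real_fun_independent_image(2))
  let ?U = "u ` (J - {j0})"
  have "u j0 = (\<Sum>j\<in>J - {j0}. (\<lambda>x. (- e j / e j0) * u j x))"
  proof
    fix t
    have "e j0 * u j0 t + (\<Sum>j\<in>J - {j0}. e j * u j t) = 0"
      using e[of t] sum.remove[OF J(1) j0, of "\<lambda>j. e j * u j t"] by simp
    then have "u j0 t = - (\<Sum>j\<in>J - {j0}. e j * u j t) / e j0"
      using ne by (simp add: field_simps eq_neg_iff_add_eq_0)
    then show "u j0 t = (\<Sum>j\<in>J - {j0}. (\<lambda>x. (- e j / e j0) * u j x)) t"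
      by (simp add: sum_fun_apply sum_divide_distrib flip: sum_negf)
  qed
  also have "\<dots> \<in> real_fun.span ?U"
    by (intro real_fun.span_sum real_fun.span_scale real_fun.span_base) auto
  finally have "u ` J \<subseteq> real_fun.span ?U"
    using real_fun.span_base[of _ ?U] by (auto simp: image_iff)
  moreover have "m ` {..K} \<subseteq> real_fun.span (u ` J)"
  proof
    fix v assume "v \<in> m ` {..K}"
    then obtain k where "k \<le> K" "v = m k" by auto
    moreover obtain c where "\<forall>t. m k t = (\<Sum>j\<in>J. c j * u j t)"
      using m_span[OF \<open>k \<le> K\<close>] by blast
    ultimately have "v = (\<Sum>j\<in>J. (\<lambda>x. c j * u j x))"
      by (auto simp: fun_eq_iff sum_fun_apply)
    also have "\<dots> \<in> real_fun.span (u ` J)"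
      by (intro real_fun.span_sum real_fun.span_scale real_fun.span_base) auto
    finally show "v \<in> real_fun.span (u ` J)" .
  qed
  ultimately have "m ` {..K} \<subseteq> real_fun.span ?U"
    using real_fun.span_minimal[OF _ real_fun.subspace_span, of "u ` J"] by (meson order_trans)
  then have "card (m ` {..K}) \<le> card ?U"
    using real_fun.independent_span_bound[of ?U "m ` {..K}"] indep J(1) by simp
  also have "\<dots> \<le> card (J - {j0})" by (rule card_image_le) (use J in auto)
  also have "\<dots> \<le> K" using J j0 by simp
  finally show False
    using card_image[OF inj] by simp
qed

lemma Omega_ref_subset_cbox: "Omega_ref \<subseteq> cbox (-1,-1) (1,1)"
  unfolding Omega_ref_def by (auto simp: cbox_Pair_eq)

lemma compact_Omega_ref: "compact Omega_ref"
proof -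
  have "closed ({x. -1 \<le> fst x} \<inter> {x. -1 \<le> snd x} \<inter> {x. fst x + snd x \<le> (0::real)})"
    by (intro closed_Int closed_Collect_le continuous_intros)
  moreover have "Omega_ref = {x. -1 \<le> fst x} \<inter> {x. -1 \<le> snd x} \<inter> {x. fst x + snd x \<le> 0}"
    unfolding Omega_ref_def by auto
  ultimately show ?thesis
    using Omega_ref_subset_cbox by (metis bounded_cbox bounded_subset compact_eq_bounded_closed)
qed

lemma continuous_integrable_on_Omega_ref:
  fixes g :: "real \<times> real \<Rightarrow> real"
  assumes "continuous_on UNIV g"
  shows "g integrable_on Omega_ref"
proof -
  have "g absolutely_integrable_on cbox (-1,-1) (1,1)"
    by (rule absolutely_integrable_continuous) (rule continuous_on_subset[OF assms], simp)
  then have "g absolutely_integrable_on Omega_ref"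
    using compact_Omega_ref Omega_ref_subset_cbox
    by (auto intro: set_integrable_subset fmeasurableD lmeasurable_compact)
  then show ?thesis
    by (simp add: absolutely_integrable_on_def)
qed

lemma integral_Omega_ref_pos:
  fixes g :: "real \<times> real \<Rightarrow> real"
  assumes cont: "continuous_on UNIV g" and nonneg: "\<And>x. x \<in> Omega_ref \<Longrightarrow> 0 \<le> g x"
    and inner: "-1 < a" "-1 < b" "a + b < 0" and pos: "0 < g (a,b)"
  shows "0 < integral Omega_ref g"
proof -
  let ?S = "{x. -1 < fst x} \<inter> {x. -1 < snd x} \<inter> {x. fst x + snd x < 0} \<inter> {x. g (a,b) / 2 < g x}"
  have "open ?S"
    using cont by (intro open_Int open_Collect_less continuous_intros) auto
  moreover have "(a,b) \<in> ?S"
    using inner pos by auto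
  ultimately obtain c d where box: "cbox c d \<subseteq> ?S" and "\<forall>i\<in>Basis. c \<bullet> i < d \<bullet> i"
    by (rule open_contains_cbox)
  then have "0 < integral (cbox c d) (\<lambda>x. g (a,b) / 2)"
    using pos by (simp add: content_pos_lt_eq)
  also have "\<dots> \<le> integral (cbox c d) g"
    using box cont by (intro integral_le integrable_continuous continuous_on_subset[OF cont]) auto
  also have "\<dots> \<le> integral Omega_ref g"
    using box nonneg cont
    by (intro integral_subset_le integrable_continuous continuous_integrable_on_Omega_ref
          continuous_on_subset[OF cont]) (auto simp: Omega_ref_def)
  finally show ?thesis .
qed

lemma vanishing_on_E_A_E_C_factor:
  assumes g: "g \<in> T (Suc (Suc q))"
    and E_A: "\<And>x. x \<in> E_A \<Longrightarrow> g x = 0" and E_C: "\<And>x. x \<in> E_C \<Longrightarrow> g x = 0"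
  obtains h where "h \<in> T q" "\<And>r s. g (r,s) = (r + 1) * (s + 1) * h (r,s)"
proof -
  obtain h1 where h1: "h1 \<in> T (Suc q)" "\<And>r s. g (r,s) = (r + 1) * h1 (r,s)"
    using T_factor_fst_plus_1[OF g] E_C by (auto simp: E_C_def)
  have "h1 (r, -1) = 0" if "-1 < r" "r < 1" for r
    using E_A[of "(r, -1)"] h1(2)[of r "-1"] that by (auto simp: E_A_def)
  then obtain h2 where h2: "h2 \<in> T q" "\<And>r s. h1 (s,r) = (r + 1) * h2 (r,s)"
    using T_factor_fst_plus_1[OF T_swap[OF h1(1)]] by auto
  have "(\<lambda>(r,s). h2 (s,r)) \<in> T q"
    using T_swap[OF h2(1)] .
  moreover have "g (r,s) = (r + 1) * (s + 1) * (\<lambda>(r,s). h2 (s,r)) (r,s)" for r s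
    using h1(2)[of r s] h2(2)[of r s] by simp
  ultimately show ?thesis using that by blast
qed

lemma basis_coeff_zero_if_vanishing_on_E_B:
  assumes basis: "is_basis_T p N \<psi>" and J: "J \<subseteq> {..<N}" "card J \<le> Suc p"
    and outside_J: "\<And>i x. i < N \<Longrightarrow> i \<notin> J \<Longrightarrow> x \<in> E_B \<Longrightarrow> \<psi> i x = 0"
    and e: "\<And>x. x \<in> E_B \<Longrightarrow> (\<Sum>i<N. e i * \<psi> i x) = 0" and "j \<in> J"
  shows "e j = 0"
proof -
  have "finite J" using J(1) finite_subset by blast
  have restrict_J: "(\<Sum>i<N. c i * \<psi> i x) = (\<Sum>j\<in>J. c j * \<psi> j x)" if "x \<in> E_B" for c x
    by (rule sum.mono_neutral_right) (use J(1) outside_J that in auto)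
  have E_B_param: "(t, -t) \<in> E_B" if "t \<in> {-1..1}" for t
    using that by (auto simp: E_B_def)
  \<comment> \<open>traces on \<open>E_B\<close> along \<open>t \<mapsto> (t, -t)\<close>, cut off outside \<open>[-1, 1]\<close>\<close>
  define u where "u j t = indicator {-1..1} t * \<psi> j (t, -t)" for j and t :: real
  define m where "m k t = indicator {-1..1} t * t ^ k" for k and t :: real
  show ?thesis
  proof (rule combination_eq_0_if_span_contains_independent[where u=u and m=m and K=p])
    fix a assume a: "\<And>t. (\<Sum>k\<le>p. a k * m k t) = 0"
    show "\<forall>k\<le>p. a k = 0"
    proof (intro allI impI)
      fix k assume "k \<le> p"
      show "a k = 0"
      proof (rule polyfun_eq_0_on_Ioo[where a="-1" and b=1 and n=p and c=a])
        show "(\<Sum>k\<le>p. a k * t ^ k) = 0" if "-1 < t" "t < 1" for t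
          using a[of t] that by (simp add: m_def)
      qed (use \<open>k \<le> p\<close> in simp_all)
    qed
  next
    fix k assume "k \<le> p"
    then have "(\<lambda>x. fst x ^ k) \<in> T p"
      by (rule T_fst_power)
    with basis obtain c where c: "\<forall>x\<in>Omega_ref. (\<Sum>i<N. c i * \<psi> i x) = fst x ^ k"
      unfolding is_basis_T_def by fastforce
    have "m k t = (\<Sum>j\<in>J. c j * u j t)" for t
    proof (cases "t \<in> {-1..1}")
      case True
      then have "(t, -t) \<in> Omega_ref" by (auto simp: Omega_ref_def)
      then show ?thesis
        using c restrict_J[OF E_B_param[OF True], of c] True
        by (simp add: m_def u_def)
    qed (simp add: m_def u_def)
    then show "\<exists>c. \<forall>t. m k t = (\<Sum>j\<in>J. c j * u j t)" by blast
  next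
    fix t
    show "(\<Sum>j\<in>J. e j * u j t) = 0"
      using e[OF E_B_param] restrict_J[OF E_B_param, of t e]
      by (cases "t \<in> {-1..1}") (simp_all add: u_def sum_distrib_left mult_ac)
  qed (use \<open>finite J\<close> J(2) \<open>j \<in> J\<close> in auto)
qed

lemma integral_edge_bubble_pos:
  assumes h: "h \<in> T q" and g: "\<And>r s. g (r,s) = (r + 1) * (s + 1) * h (r,s)"
    and x0: "x0 \<in> E_B" "g x0 \<noteq> 0"
  shows "0 < integral Omega_ref (\<lambda>y. - (fst y + snd y) * h y * g y)"
proof -
  obtain t where t: "x0 = (t, -t)" "-1 < t" "t < 1"
    using x0 g[of "fst x0" "snd x0"] by (cases x0) (auto simp: E_B_def)
  have "open {y. h y \<noteq> 0}"
    using T_continuous[OF h] by (intro open_Collect_neq continuous_intros)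
  moreover have "h x0 \<noteq> 0"
    using x0(2) g[of t "-t"] t(1) by simp
  ultimately obtain \<delta> where \<delta>: "\<delta> > 0" "ball x0 \<delta> \<subseteq> {y. h y \<noteq> 0}"
    using open_contains_ball_eq by blast
  define \<eta> where "\<eta> = min (\<delta>/3) (min ((1 + t)/2) ((1 - t)/2))"
  have \<eta>: "0 < \<eta>" "\<eta> \<le> \<delta>/3" "\<eta> \<le> (1 + t)/2" "\<eta> \<le> (1 - t)/2"
    unfolding \<eta>_def using \<delta>(1) t(2,3) by (auto simp: min_def)
  have "dist (t - \<eta>, -t - \<eta>) x0 \<le> dist (t - \<eta>) t + dist (-t - \<eta>) (-t)"
    unfolding t(1) dist_Pair_Pair by (rule sqrt_sum_squares_le_sum) simp_all
  also have "\<dots> < \<delta>" using \<eta>(1,2) by (simp add: dist_real_def)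
  finally have "h (t - \<eta>, -t - \<eta>) \<noteq> 0"
    using subsetD[OF \<delta>(2)] by (simp add: dist_commute)
  have integrand: "- (fst y + snd y) * h y * g y = - (fst y + snd y) * (fst y + 1) * (snd y + 1) * (h y)\<^sup>2"
    for y using g[of "fst y" "snd y"] by (simp add: power2_eq_square)
  show ?thesis
    unfolding integrand
  proof (rule integral_Omega_ref_pos[where a="t - \<eta>" and b="-t - \<eta>"])
    show "continuous_on UNIV (\<lambda>y. - (fst y + snd y) * (fst y + 1) * (snd y + 1) * (h y)\<^sup>2)"
      using T_continuous[OF h] by (intro continuous_intros)
    show "0 \<le> - (fst y + snd y) * (fst y + 1) * (snd y + 1) * (h y)\<^sup>2" if "y \<in> Omega_ref" for y
      using that by (cases y) (simp add: Omega_ref_def)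
  qed (use \<eta> \<open>h (t - \<eta>, -t - \<eta>) \<noteq> 0\<close> in simp_all)
qed

lemma suitable_basis_E_B_support:
  assumes "suitable_basis p \<psi>" and "2 \<le> p"
  obtains J i0 where "J \<subseteq> {..<(p + 1) * (p + 2) div 2}" "card J \<le> Suc p" "i0 \<in> J"
    "edge_fun E_B E_A E_C (\<psi> i0)"
    "\<And>i x. i < (p + 1) * (p + 2) div 2 \<Longrightarrow> i \<notin> J \<Longrightarrow> x \<in> E_B \<Longrightarrow> \<psi> i x = 0"
proof -
  obtain a b c IA IB IC I where
    part: "{a, b, c} \<union> IA \<union> IB \<union> IC \<union> I = {..<(p + 1) * (p + 2) div 2}" and
    card_IB: "card IB = p - 1" and
    vertex_b: "vertex_fun V_B {V_A, V_C} E_B (\<psi> b)" and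
    edge_A: "\<forall>i\<in>IA. edge_fun E_A E_B E_C (\<psi> i)" and
    edge_B: "\<forall>i\<in>IB. edge_fun E_B E_A E_C (\<psi> i)" and
    edge_C: "\<forall>i\<in>IC. edge_fun E_C E_A E_B (\<psi> i)" and
    interior: "\<forall>i\<in>I. interior_fun (\<psi> i)"
    using assms(1) unfolding suitable_basis_def Let_def by metis
  have "finite IB" and "IB \<noteq> {}"
    using card_IB assms(2) by (auto intro: card_ge_0_finite)
  then obtain i0 where "i0 \<in> IB" by blast
  let ?J = "insert a (insert c IB)"
  have "card ?J \<le> Suc p"
    using \<open>finite IB\<close> card_IB assms(2) by (auto simp: card_insert_if)
  moreover have "\<psi> i x = 0" if "i < (p + 1) * (p + 2) div 2" "i \<notin> ?J" "x \<in> E_B" for i x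
  proof -
    have "i = b \<or> i \<in> IA \<or> i \<in> IC \<or> i \<in> I"
      using that(1,2) part by blast
    then show ?thesis
      using that(3) vertex_b edge_A edge_C interior
      unfolding vertex_fun_def edge_fun_def interior_fun_def by blast
  qed
  ultimately show ?thesis
    using that[of ?J i0] part \<open>i0 \<in> IB\<close> edge_B by blast
qed

theorem theorem3p2:
  fixes p :: nat
  assumes "p \<ge> 2"
  shows "\<not> (\<exists>(\<psi> :: nat \<Rightarrow> real \<times> real \<Rightarrow> real) (d :: nat \<Rightarrow> real).
            suitable_basis p \<psi> \<and>
            (\<forall>i < (p + 1) * (p + 2) div 2. d i \<noteq> 0) \<and>
            (\<forall>f \<in> T (p - 1). \<forall>x \<in> Omega_ref.
               (\<Sum>i < (p + 1) * (p + 2) div 2.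
                  (integral Omega_ref (\<lambda>y. f y * \<psi> i y) / d i) * \<psi> i x) = f x))"
proof
  define N where "N = (p + 1) * (p + 2) div 2"
  assume "\<exists>\<psi> d. suitable_basis p \<psi> \<and> (\<forall>i < (p + 1) * (p + 2) div 2. d i \<noteq> 0) \<and>
            (\<forall>f \<in> T (p - 1). \<forall>x \<in> Omega_ref. (\<Sum>i < (p + 1) * (p + 2) div 2.
                  (integral Omega_ref (\<lambda>y. f y * \<psi> i y) / d i) * \<psi> i x) = f x)"
  then obtain \<psi> d where suitable: "suitable_basis p \<psi>" and d: "\<forall>i<N. d i \<noteq> 0"
    and exact: "\<forall>f \<in> T (p - 1). \<forall>x \<in> Omega_ref.
                  (\<Sum>i<N. (integral Omega_ref (\<lambda>y. f y * \<psi> i y) / d i) * \<psi> i x) = f x"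
    unfolding N_def by blast
  have basis: "is_basis_T p N \<psi>"
    using suitable unfolding suitable_basis_def N_def by metis
  obtain J i0 where J: "J \<subseteq> {..<N}" "card J \<le> Suc p" "i0 \<in> J"
    and edge: "edge_fun E_B E_A E_C (\<psi> i0)"
    and outside_J: "\<And>i x. i < N \<Longrightarrow> i \<notin> J \<Longrightarrow> x \<in> E_B \<Longrightarrow> \<psi> i x = 0"
    using suitable_basis_E_B_support[OF suitable assms] unfolding N_def by metis
  obtain q where p: "p = Suc (Suc q)"
    using assms by (metis add_2_eq_Suc le_Suc_ex)
  have "\<psi> i0 \<in> T (Suc (Suc q))"
    using basis J(1,3) p unfolding is_basis_T_def by auto
  then obtain h where h: "h \<in> T q" "\<And>r s. \<psi> i0 (r,s) = (r + 1) * (s + 1) * h (r,s)"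
    by (rule vanishing_on_E_A_E_C_factor) (use edge in \<open>auto simp: edge_fun_def\<close>)
  let ?f = "\<lambda>y. - (fst y + snd y) * h y"
  have "integral Omega_ref (\<lambda>y. ?f y * \<psi> i0 y) / d i0 = 0"
  proof (rule basis_coeff_zero_if_vanishing_on_E_B[OF basis J(1,2) outside_J _ J(3)])
    fix x assume "x \<in> E_B"
    then have "x \<in> Omega_ref" and "?f x = 0"
      by (auto simp: E_B_def Omega_ref_def)
    then show "(\<Sum>i<N. integral Omega_ref (\<lambda>y. ?f y * \<psi> i y) / d i * \<psi> i x) = 0"
      using exact T_mult_neg_sum[OF h(1)] p by simp
  qed
  moreover obtain x0 where x0: "x0 \<in> E_B" "\<psi> i0 x0 \<noteq> 0"
    using edge unfolding edge_fun_def by blast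
  ultimately show False
    using integral_edge_bubble_pos[OF h x0] d J(1,3) by auto
qed
end
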